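(* Let $\Sigma 2$ be the Sierpiński space and $\Sigma\mathbb{N}$ the natural numbers with the Scott topology of the usual order (which is $S^{\ast}$-well-filtered). Then the function space $[\Sigma 2,\Sigma\mathbb{N}]$ with the Isbell topology is not weak well-filtered, hence not $S^{\ast}$-well-filtered. Thus $Y$ being $S^{\ast}$-well-filtered does not imply that $[X,Y]$ is $S^{\ast}$-well-filtered for nonempty $T_0$-spaces $X$.
   Context: $\Sigma 2$ is the two-element chain $0<1$ with its Scott topology (open sets $\emptyset,\{1\},\{0,1\}$). $[X,Y]$ denotes the set of continuous maps $X\to Y$ with the Isbell topology, generated by the subbasic sets $N(H\leftarrow V)=\{f\mid f^{-1}(V)\in H\}$ where $H$ is a Scott open subset of the complete lattice $\mathcal{O}(X)$ of open sets of $X$ and $V$ is open in $Y$. For a space $Z$, ${\uparrow}$ is taken in the specialization order ($x\le y$ iff $x\in cl\{y\}$); $K(Z)$ is the set of nonempty compact saturated (= upper) subsets; a family in $K(Z)$ is filtered if any two members contain a common member. $Z$ is weak well-filtered if for every filtered $\{K_i\}\subseteq K(Z)$ and nonempty open $U$, $\bigcap_i K_i\subseteq U$ implies $K_i\subseteq U$ for some $i$; $Z$ is $S^{\ast}$-well-filtered if for every filtered $\{K_i\}\subseteq K(Z)$, $G\in K(Z)$ and nonempty open $U$, $\bigcap_i K_i\cap G\subseteq U$ implies $K_i\cap G\subseteq U$ for some $i$. *)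

theory Defs
  imports "HOL-Analysis.Analysis"
begin

definition directed_set :: "'a::order set \<Rightarrow> bool" where
  "directed_set D \<longleftrightarrow> D \<noteq> {} \<and> (\<forall>a\<in>D. \<forall>b\<in>D. \<exists>c\<in>D. a \<le> c \<and> b \<le> c)"

definition is_lub :: "'a::order set \<Rightarrow> 'a \<Rightarrow> bool" where
  "is_lub D s \<longleftrightarrow> (\<forall>d\<in>D. d \<le> s) \<and> (\<forall>u. (\<forall>d\<in>D. d \<le> u) \<longrightarrow> s \<le> u)"

definition scott_open :: "'a::order set \<Rightarrow> bool" where
  "scott_open U \<longleftrightarrow> (\<forall>x\<in>U. \<forall>y. x \<le> y \<longrightarrow> y \<in> U) \<and>
     (\<forall>D s. directed_set D \<and> is_lub D s \<and> s \<in> U \<longrightarrow> D \<inter> U \<noteq> {})"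

lemma scott_open_Int:
  assumes hS: "scott_open S" and hT: "scott_open T"
  shows "scott_open (S \<inter> T)"
  unfolding scott_open_def
proof (intro conjI allI impI ballI)
  fix x y assume "x \<in> S \<inter> T" "x \<le> y"
  then show "y \<in> S \<inter> T" using hS hT unfolding scott_open_def by auto
next
  fix D s assume d: "directed_set D \<and> is_lub D s \<and> s \<in> S \<inter> T"
  have "D \<inter> S \<noteq> {}" using hS d unfolding scott_open_def by blast
  then obtain a where a: "a \<in> D" "a \<in> S" by blast
  have "D \<inter> T \<noteq> {}" using hT d unfolding scott_open_def by blast
  then obtain b where b: "b \<in> D" "b \<in> T" by blast
  obtain c where c: "c \<in> D" "a \<le> c" "b \<le> c" using d a b unfolding directed_set_def by auto
  have "c \<in> S" using hS a c unfolding scott_open_def by auto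
  moreover have "c \<in> T" using hT b c unfolding scott_open_def by auto
  ultimately show "D \<inter> (S \<inter> T) \<noteq> {}" using c by auto
qed

lemma scott_open_Union:
  assumes h: "\<And>S. S \<in> K \<Longrightarrow> scott_open S"
  shows "scott_open (\<Union>K)"
  unfolding scott_open_def
proof (intro conjI allI impI ballI)
  fix x y assume "x \<in> \<Union>K" "x \<le> y"
  then obtain S where "S \<in> K" "x \<in> S" by auto
  then have "y \<in> S" using h[of S] \<open>x \<le> y\<close> unfolding scott_open_def by auto
  then show "y \<in> \<Union>K" using \<open>S \<in> K\<close> by auto
next
  fix D s assume d: "directed_set D \<and> is_lub D s \<and> s \<in> \<Union>K"
  then obtain S where S: "S \<in> K" "s \<in> S" by auto
  then have "D \<inter> S \<noteq> {}" using h[of S] d unfolding scott_open_def by blast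
  then show "D \<inter> \<Union>K \<noteq> {}" using S by auto
qed

lemma istopology_scott_open: "istopology scott_open"
  unfolding istopology_def using scott_open_Int scott_open_Union by blast

definition scott_topology :: "'a::order topology" where
  "scott_topology = topology scott_open"

definition spec_le :: "'a topology \<Rightarrow> 'a \<Rightarrow> 'a \<Rightarrow> bool" where
  "spec_le Z x y \<longleftrightarrow> x \<in> topspace Z \<and> y \<in> topspace Z \<and> x \<in> Z closure_of {y}"

definition saturated_in :: "'a topology \<Rightarrow> 'a set \<Rightarrow> bool" where
  "saturated_in Z A \<longleftrightarrow> A \<subseteq> topspace Z \<and> (\<forall>x\<in>A. \<forall>y. spec_le Z x y \<longrightarrow> y \<in> A)"

definition Kset :: "'a topology \<Rightarrow> 'a set set" where
  "Kset Z = {K. K \<noteq> {} \<and> compactin Z K \<and> saturated_in Z K}"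

definition filtered_K :: "'a topology \<Rightarrow> 'a set set \<Rightarrow> bool" where
  "filtered_K Z \<K> \<longleftrightarrow> \<K> \<noteq> {} \<and> \<K> \<subseteq> Kset Z \<and>
     (\<forall>K1\<in>\<K>. \<forall>K2\<in>\<K>. \<exists>K3\<in>\<K>. K3 \<subseteq> K1 \<and> K3 \<subseteq> K2)"

definition weak_well_filtered :: "'a topology \<Rightarrow> bool" where
  "weak_well_filtered Z \<longleftrightarrow>
     (\<forall>\<K> U. filtered_K Z \<K> \<and> openin Z U \<and> U \<noteq> {} \<and> \<Inter>\<K> \<subseteq> U \<longrightarrow> (\<exists>K\<in>\<K>. K \<subseteq> U))"

definition S_star_well_filtered :: "'a topology \<Rightarrow> bool" where
  "S_star_well_filtered Z \<longleftrightarrow>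
     (\<forall>\<K> G U. filtered_K Z \<K> \<and> G \<in> Kset Z \<and> openin Z U \<and> U \<noteq> {} \<and> \<Inter>\<K> \<inter> G \<subseteq> U
        \<longrightarrow> (\<exists>K\<in>\<K>. K \<inter> G \<subseteq> U))"

text \<open>Continuous maps X \<rightarrow> Y, represented extensionally (value undefined outside topspace X).\<close>
definition cmaps :: "'a topology \<Rightarrow> 'b topology \<Rightarrow> ('a \<Rightarrow> 'b) set" where
  "cmaps X Y = {f. continuous_map X Y f \<and> (\<forall>x. x \<notin> topspace X \<longrightarrow> f x = undefined)}"

text \<open>Scott open subsets of the complete lattice O(X) (ordered by inclusion, joins are unions).\<close>
definition scott_open_OX :: "'a topology \<Rightarrow> 'a set set \<Rightarrow> bool" where
  "scott_open_OX X H \<longleftrightarrow> H \<subseteq> {U. openin X U} \<and>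
     (\<forall>U\<in>H. \<forall>V. openin X V \<and> U \<subseteq> V \<longrightarrow> V \<in> H) \<and>
     (\<forall>\<D>. \<D> \<noteq> {} \<and> (\<forall>U\<in>\<D>. openin X U) \<and> (\<forall>U\<in>\<D>. \<forall>V\<in>\<D>. \<exists>W\<in>\<D>. U \<subseteq> W \<and> V \<subseteq> W)
          \<and> \<Union>\<D> \<in> H \<longrightarrow> (\<exists>U\<in>\<D>. U \<in> H))"

definition isbell_subbasic :: "'a topology \<Rightarrow> 'b topology \<Rightarrow> 'a set set \<Rightarrow> 'b set \<Rightarrow> ('a \<Rightarrow> 'b) set" where
  "isbell_subbasic X Y H V = {f \<in> cmaps X Y. {x \<in> topspace X. f x \<in> V} \<in> H}"

definition isbell_topology :: "'a topology \<Rightarrow> 'b topology \<Rightarrow> ('a \<Rightarrow> 'b) topology" where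
  "isbell_topology X Y = topology_generated_by
     {isbell_subbasic X Y H V | H V. scott_open_OX X H \<and> openin Y V}"

end

theory Submission
  imports Defs
begin

(* In the Scott topology of \<nat> the nonempty saturated sets are the up-sets {m..}. Hence a filtered
   family of them either has a least member, which then equals its intersection, or contains
   members inside any given nonempty open set {u..}; this is S*-well-filteredness.

   In [\<Sigma>2, \<Sigma>\<nat>] evaluation at a point gives Isbell-open sets, and every Isbell-open set is an
   up-set for the pointwise order. So K_n = {f | n \<le> f 1} is open, and it is the principal up-set
   of the step map p_n (0 \<mapsto> 0, 1 \<mapsto> n); thus it is compact saturated. The K_n form a filtered
   family with empty intersection, but no K_n lies in the nonempty open set {f | 1 \<le> f 0}, since
   p_n is not in it. Finally the whole space K_0 is compact, so S*-well-filteredness would imply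
   weak well-filteredness. *)

definition upward_closed :: "'a::order set \<Rightarrow> bool" where
  "upward_closed U \<longleftrightarrow> (\<forall>x\<in>U. \<forall>y. x \<le> y \<longrightarrow> y \<in> U)"

lemma upward_closedD: "upward_closed U \<Longrightarrow> x \<in> U \<Longrightarrow> x \<le> y \<Longrightarrow> y \<in> U"
  unfolding upward_closed_def by blast

lemma openin_scott_topology: "openin scott_topology = scott_open"
  unfolding scott_topology_def by (rule topology_inverse'[OF istopology_scott_open])

lemma topspace_scott_topology [simp]: "topspace (scott_topology :: 'a::order topology) = UNIV"
proof -
  have "scott_open (UNIV :: 'a set)"
    unfolding scott_open_def directed_set_def by auto
  then show ?thesis
    unfolding topspace_def openin_scott_topology by auto
qed

lemma scott_open_imp_upward_closed: "scott_open U \<Longrightarrow> upward_closed U"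
  unfolding scott_open_def upward_closed_def by blast

lemma scott_open_iff_upward_closed:
  fixes U :: "'a::linorder set"
  assumes finite_below: "\<And>s::'a. finite {..s}"
  shows "scott_open U \<longleftrightarrow> upward_closed U"
proof
  assume up: "upward_closed U"
  show "scott_open U"
    unfolding scott_open_def
  proof (intro conjI allI impI)
    show "\<forall>x\<in>U. \<forall>y. x \<le> y \<longrightarrow> y \<in> U"
      using up unfolding upward_closed_def .
  next
    fix D s assume D: "directed_set D \<and> is_lub D s \<and> s \<in> U"
    have "D \<noteq> {}"
      using D unfolding directed_set_def by blast
    have "D \<subseteq> {..s}"
      using D unfolding is_lub_def by auto
    then have "finite D"
      by (rule finite_subset[OF _ finite_below])
    then have "Max D \<in> D"
      using \<open>D \<noteq> {}\<close> by simp
    moreover have "s \<le> Max D"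
      using D \<open>finite D\<close> unfolding is_lub_def by simp
    ultimately show "D \<inter> U \<noteq> {}"
      using up D by (blast dest: upward_closedD)
  qed
qed (rule scott_open_imp_upward_closed)

lemma openin_scott_topology_nat:
  "openin (scott_topology :: nat topology) U \<longleftrightarrow> upward_closed U"
  by (simp add: openin_scott_topology scott_open_iff_upward_closed[OF finite_atMost])

lemma continuous_map_scott_topology_if_mono:
  fixes f :: "'a::linorder \<Rightarrow> 'b::order"
  assumes finite_below: "\<And>s::'a. finite {..s}" and "mono f"
  shows "continuous_map scott_topology scott_topology f"
proof -
  have "scott_open {x. f x \<in> V}" if "scott_open V" for V
  proof -
    have "upward_closed V"
      using that by (rule scott_open_imp_upward_closed)
    then have "upward_closed {x. f x \<in> V}"
      using \<open>mono f\<close> unfolding upward_closed_def by (blast dest: monoD)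
    then show ?thesis
      by (simp add: scott_open_iff_upward_closed[OF finite_below])
  qed
  then show ?thesis
    unfolding continuous_map_def openin_scott_topology by simp
qed

lemma spec_le_imp_in_openin: "spec_le Z x y \<Longrightarrow> openin Z V \<Longrightarrow> x \<in> V \<Longrightarrow> y \<in> V"
  unfolding spec_le_def in_closure_of by blast

text \<open>The lower set of a point is Scott closed, so the specialization order is the given order.\<close>

lemma spec_le_scott_topology: "spec_le scott_topology x y \<longleftrightarrow> x \<le> y"
proof
  assume "spec_le scott_topology x y"
  moreover have "scott_open {z. \<not> z \<le> y}"
    unfolding scott_open_def is_lub_def by (blast intro: order_trans)
  ultimately show "x \<le> y"
    using spec_le_imp_in_openin by (fastforce simp: openin_scott_topology)
next
  assume "x \<le> y"
  then show "spec_le scott_topology x y"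
    unfolding spec_le_def in_closure_of openin_scott_topology
    by (auto dest: scott_open_imp_upward_closed upward_closedD)
qed

lemma saturated_in_scott_topology: "saturated_in scott_topology K \<longleftrightarrow> upward_closed K"
  unfolding saturated_in_def upward_closed_def spec_le_scott_topology by simp

lemma upward_closed_nat_eq_atLeast:
  fixes K :: "nat set"
  assumes "upward_closed K" "K \<noteq> {}"
  shows "K = {Least (\<lambda>n. n \<in> K)..}"
  using assms LeastI_ex[of "\<lambda>n. n \<in> K"] Least_le[of "\<lambda>n. n \<in> K"]
  by (auto dest: upward_closedD)

lemma upward_closed_nat_family_subset_atLeast_or_least:
  fixes \<K> :: "nat set set"
  assumes "\<K> \<noteq> {}" and up: "\<And>K. K \<in> \<K> \<Longrightarrow> upward_closed K \<and> K \<noteq> {}"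
  shows "(\<exists>K\<in>\<K>. K \<subseteq> {u..}) \<or> (\<exists>K\<in>\<K>. K \<subseteq> \<Inter>\<K>)"
proof (cases "\<exists>K\<in>\<K>. u \<le> Least (\<lambda>n. n \<in> K)")
  case True
  then obtain K where K: "K \<in> \<K>" "u \<le> Least (\<lambda>n. n \<in> K)"
    by blast
  have "K \<subseteq> {u..}"
  proof
    fix x assume "x \<in> K"
    then have "Least (\<lambda>n. n \<in> K) \<le> x"
      by (rule Least_le)
    with K(2) show "x \<in> {u..}"
      by simp
  qed
  with K(1) show ?thesis
    by blast
next
  case False
  define mins where "mins = (\<lambda>K. Least (\<lambda>n. n \<in> K)) ` \<K>"
  have "mins \<subseteq> {..<u}"
    using False unfolding mins_def by auto
  then have "finite mins"
    by (rule finite_subset) simp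
  then have "Max mins \<in> mins"
    using \<open>\<K> \<noteq> {}\<close> unfolding mins_def by simp
  then obtain K0 where K0: "K0 \<in> \<K>" "Least (\<lambda>n. n \<in> K0) = Max mins"
    unfolding mins_def by auto
  have "K0 \<subseteq> K" if "K \<in> \<K>" for K
  proof -
    have "Least (\<lambda>n. n \<in> K) \<le> Least (\<lambda>n. n \<in> K0)"
      using K0(2) \<open>finite mins\<close> that unfolding mins_def by simp
    then show ?thesis
      using upward_closed_nat_eq_atLeast up K0(1) that by (metis atLeast_subset_iff)
  qed
  then show ?thesis
    using K0(1) by blast
qed

lemma S_star_well_filtered_scott_nat: "S_star_well_filtered (scott_topology :: nat topology)"
  unfolding S_star_well_filtered_def
proof (intro allI impI, elim conjE)
  fix \<K> G and U :: "nat set"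
  assume filt: "filtered_K scott_topology \<K>" and "openin scott_topology U" "U \<noteq> {}"
    and cover: "\<Inter>\<K> \<inter> G \<subseteq> U"
  then obtain u where "u \<in> U" "{u..} \<subseteq> U"
    by (auto simp: openin_scott_topology_nat dest: upward_closedD)
  have "(\<exists>K\<in>\<K>. K \<subseteq> {u..}) \<or> (\<exists>K\<in>\<K>. K \<subseteq> \<Inter>\<K>)"
  proof (rule upward_closed_nat_family_subset_atLeast_or_least)
    show "\<K> \<noteq> {}"
      using filt unfolding filtered_K_def by blast
    have "\<K> \<subseteq> Kset scott_topology"
      using filt unfolding filtered_K_def by blast
    then show "upward_closed K \<and> K \<noteq> {}" if "K \<in> \<K>" for K
      using that unfolding Kset_def saturated_in_scott_topology by blast
  qed
  then show "\<exists>K\<in>\<K>. K \<inter> G \<subseteq> U"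
  proof (elim disjE bexE)
    fix K assume "K \<in> \<K>" "K \<subseteq> {u..}"
    have "K \<inter> G \<subseteq> U"
      using \<open>K \<subseteq> {u..}\<close> \<open>{u..} \<subseteq> U\<close> by auto
    from this \<open>K \<in> \<K>\<close> show ?thesis ..
  next
    fix K assume "K \<in> \<K>" "K \<subseteq> \<Inter>\<K>"
    have "K \<inter> G \<subseteq> \<Inter>\<K> \<inter> G"
      using \<open>K \<subseteq> \<Inter>\<K>\<close> by (rule Int_mono) (rule order_refl)
    also note cover
    finally show ?thesis
      using \<open>K \<in> \<K>\<close> ..
  qed
qed

lemma saturated_in_openin:
  assumes "openin Z U"
  shows "saturated_in Z U"
  unfolding saturated_in_def
proof (intro conjI ballI allI impI)
  show "U \<subseteq> topspace Z"
    using assms by (rule openin_subset)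
  fix x y assume "x \<in> U" "spec_le Z x y"
  then show "y \<in> U"
    using spec_le_imp_in_openin assms by metis
qed

lemma compactin_if_open_nbhds_contain:
  assumes "A \<subseteq> topspace Z" "a \<in> A" and nbhds: "\<And>W. openin Z W \<Longrightarrow> a \<in> W \<Longrightarrow> A \<subseteq> W"
  shows "compactin Z A"
  unfolding compactin_def
proof (intro conjI allI impI)
  fix \<U> assume "Ball \<U> (openin Z) \<and> A \<subseteq> \<Union>\<U>"
  then obtain W where "W \<in> \<U>" "openin Z W" "a \<in> W"
    using \<open>a \<in> A\<close> by auto
  then have "finite {W} \<and> {W} \<subseteq> \<U> \<and> A \<subseteq> \<Union>{W}"
    using nbhds by simp
  then show "\<exists>\<F>. finite \<F> \<and> \<F> \<subseteq> \<U> \<and> A \<subseteq> \<Union>\<F>"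
    by (rule exI)
qed (fact assms(1))

lemma weak_well_filtered_if_S_star_well_filtered:
  assumes S_star: "S_star_well_filtered Z" and "compact_space Z" "topspace Z \<noteq> {}"
  shows "weak_well_filtered Z"
  unfolding weak_well_filtered_def
proof (intro allI impI, elim conjE)
  fix \<K> U
  assume filt: "filtered_K Z \<K>" and U: "openin Z U" "U \<noteq> {}" and cover: "\<Inter>\<K> \<subseteq> U"
  have "saturated_in Z (topspace Z)"
    unfolding saturated_in_def spec_le_def by simp
  with assms(2,3) have "topspace Z \<in> Kset Z"
    unfolding Kset_def compact_space_def by simp
  moreover have "\<Inter>\<K> \<inter> topspace Z \<subseteq> U"
    using cover by auto
  ultimately obtain K where K: "K \<in> \<K>" "K \<inter> topspace Z \<subseteq> U"
    using S_star filt U unfolding S_star_well_filtered_def by blast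
  have "K \<subseteq> topspace Z"
    using filt K(1) unfolding filtered_K_def Kset_def by (auto dest: compactin_subset_topspace)
  with K show "\<exists>K\<in>\<K>. K \<subseteq> U"
    by auto
qed

lemma cmaps_scott_topology:
  "cmaps (scott_topology :: 'a::order topology) Y = {f. continuous_map scott_topology Y f}"
  unfolding cmaps_def by simp

lemma openin_isbell_topology_subbasic:
  "scott_open_OX X H \<Longrightarrow> openin Y V \<Longrightarrow> openin (isbell_topology X Y) (isbell_subbasic X Y H V)"
  unfolding isbell_topology_def openin_topology_generated_by_iff
  by (rule generate_topology_on.Basis) blast

lemma scott_open_OX_upward: "scott_open_OX X H \<Longrightarrow> U \<in> H \<Longrightarrow> openin X V \<Longrightarrow> U \<subseteq> V \<Longrightarrow> V \<in> H"
  unfolding scott_open_OX_def by blast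

lemma scott_open_OX_openin: "scott_open_OX X {U. openin X U}"
  unfolding scott_open_OX_def by auto

lemma scott_open_OX_point_filter: "scott_open_OX X {U. openin X U \<and> x \<in> U}"
  unfolding scott_open_OX_def by blast

lemma topspace_isbell_topology: "topspace (isbell_topology X Y) = cmaps X Y"
proof
  show "topspace (isbell_topology X Y) \<subseteq> cmaps X Y"
    unfolding isbell_topology_def topology_generated_by_topspace isbell_subbasic_def by blast
  have "isbell_subbasic X Y {U. openin X U} (topspace Y) = cmaps X Y"
    unfolding isbell_subbasic_def cmaps_def
    by (auto intro: openin_continuous_map_preimage)
  then show "cmaps X Y \<subseteq> topspace (isbell_topology X Y)"
    by (metis openin_isbell_topology_subbasic openin_subset openin_topspace scott_open_OX_openin)
qed

lemma openin_isbell_topology_eval: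
  assumes "x \<in> topspace X" "openin Y V"
  shows "openin (isbell_topology X Y) {f \<in> cmaps X Y. f x \<in> V}"
proof -
  have "isbell_subbasic X Y {U. openin X U \<and> x \<in> U} V = {f \<in> cmaps X Y. f x \<in> V}"
    unfolding isbell_subbasic_def cmaps_def
    using assms by (auto intro: openin_continuous_map_preimage)
  then show ?thesis
    by (metis assms(2) openin_isbell_topology_subbasic scott_open_OX_point_filter)
qed

lemma openin_isbell_topology_upward:
  assumes "openin (isbell_topology X Y) W" "f \<in> W" "g \<in> cmaps X Y"
    and le: "\<And>x. x \<in> topspace X \<Longrightarrow> spec_le Y (f x) (g x)"
  shows "g \<in> W"
proof -
  have "generate_topology_on {isbell_subbasic X Y H V | H V. scott_open_OX X H \<and> openin Y V} W"
    using assms(1) unfolding isbell_topology_def openin_topology_generated_by_iff .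
  then show ?thesis
    using assms(2)
  proof (induction rule: generate_topology_on.induct)
    case (Basis s)
    then obtain H V where s: "s = isbell_subbasic X Y H V" "scott_open_OX X H" "openin Y V"
      by blast
    have "{x \<in> topspace X. f x \<in> V} \<in> H"
      using Basis.prems s(1) unfolding isbell_subbasic_def by blast
    moreover have "openin X {x \<in> topspace X. g x \<in> V}"
      using s(3) \<open>g \<in> cmaps X Y\<close> unfolding cmaps_def by (blast intro: openin_continuous_map_preimage)
    moreover have "{x \<in> topspace X. f x \<in> V} \<subseteq> {x \<in> topspace X. g x \<in> V}"
      using spec_le_imp_in_openin[OF le s(3)] by auto
    ultimately have "{x \<in> topspace X. g x \<in> V} \<in> H"
      by (rule scott_open_OX_upward[OF s(2)])
    with \<open>g \<in> cmaps X Y\<close> show ?case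
      unfolding s(1) isbell_subbasic_def by simp
  qed blast+
qed

abbreviation sierpinski_space :: "bool topology" where
  "sierpinski_space \<equiv> scott_topology"

abbreviation scott_nat :: "nat topology" where
  "scott_nat \<equiv> scott_topology"

abbreviation isbell_space :: "(bool \<Rightarrow> nat) topology" where
  "isbell_space \<equiv> isbell_topology sierpinski_space scott_nat"


definition step_map :: "nat \<Rightarrow> bool \<Rightarrow> nat" where
  "step_map n b = (if b then n else 0)"

definition above_at_True :: "nat \<Rightarrow> (bool \<Rightarrow> nat) set" where
  "above_at_True n = {f \<in> cmaps sierpinski_space scott_nat. n \<le> f True}"

definition positive_at_False :: "(bool \<Rightarrow> nat) set" where
  "positive_at_False = {f \<in> cmaps sierpinski_space scott_nat. 1 \<le> f False}"

lemma step_map_in_cmaps: "step_map n \<in> cmaps sierpinski_space scott_nat"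
proof -
  have "mono (step_map n)"
    unfolding step_map_def by (auto intro!: monoI simp: le_bool_def)
  then show ?thesis
    unfolding cmaps_scott_topology
    by (simp add: continuous_map_scott_topology_if_mono)
qed

lemma openin_atLeast_scott_nat: "openin scott_nat {n..}"
  unfolding openin_scott_topology_nat upward_closed_def by auto

lemma openin_above_at_True: "openin isbell_space (above_at_True n)"
  unfolding above_at_True_def
  using openin_isbell_topology_eval[OF _ openin_atLeast_scott_nat, of True] by simp

lemma openin_positive_at_False: "openin isbell_space positive_at_False"
  unfolding positive_at_False_def
  using openin_isbell_topology_eval[OF _ openin_atLeast_scott_nat, of False] by simp

lemma above_at_True_in_Kset: "above_at_True n \<in> Kset isbell_space"
proof -
  have sub: "above_at_True n \<subseteq> topspace isbell_space"
    unfolding topspace_isbell_topology above_at_True_def by blast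
  have step: "step_map n \<in> above_at_True n"
    using step_map_in_cmaps unfolding above_at_True_def step_map_def by simp
  have "above_at_True n \<subseteq> W" if W: "openin isbell_space W" "step_map n \<in> W" for W
  proof
    fix g assume g: "g \<in> above_at_True n"
    show "g \<in> W"
    proof (rule openin_isbell_topology_upward[OF W])
      show "g \<in> cmaps sierpinski_space scott_nat"
        using g unfolding above_at_True_def by simp
      show "spec_le scott_nat (step_map n b) (g b)" for b
        using g unfolding above_at_True_def spec_le_scott_topology step_map_def by auto
    qed
  qed
  then have "compactin isbell_space (above_at_True n)"
    using compactin_if_open_nbhds_contain[OF sub step] by blast
  then show ?thesis
    unfolding Kset_def using step saturated_in_openin[OF openin_above_at_True] by blast
qed

lemma filtered_K_above_at_True: "filtered_K isbell_space (range above_at_True)"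
  unfolding filtered_K_def
proof (intro conjI ballI)
  fix K1 K2 assume "K1 \<in> range above_at_True" "K2 \<in> range above_at_True"
  then obtain a b where "K1 = above_at_True a" "K2 = above_at_True b"
    by blast
  then have "above_at_True (max a b) \<subseteq> K1 \<and> above_at_True (max a b) \<subseteq> K2"
    unfolding above_at_True_def by auto
  then show "\<exists>K3\<in>range above_at_True. K3 \<subseteq> K1 \<and> K3 \<subseteq> K2"
    by blast
qed (use above_at_True_in_Kset in auto)

lemma Inter_above_at_True: "\<Inter>(range above_at_True) = {}"
proof -
  have "f \<notin> above_at_True (Suc (f True))" for f
    unfolding above_at_True_def by simp
  then show ?thesis
    by blast
qed

lemma above_at_True_not_subset_positive_at_False: "\<not> above_at_True n \<subseteq> positive_at_False"
proof -
  have "step_map n \<in> above_at_True n" "step_map n \<notin> positive_at_False"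
    using step_map_in_cmaps unfolding above_at_True_def positive_at_False_def step_map_def by simp_all
  then show ?thesis
    by blast
qed

lemma positive_at_False_nonempty: "positive_at_False \<noteq> {}"
proof -
  have "(\<lambda>_. 1) \<in> positive_at_False"
    unfolding positive_at_False_def cmaps_scott_topology by simp
  then show ?thesis
    by blast
qed

lemma not_weak_well_filtered_isbell_space: "\<not> weak_well_filtered isbell_space"
  unfolding weak_well_filtered_def
  using filtered_K_above_at_True openin_positive_at_False positive_at_False_nonempty
    Inter_above_at_True above_at_True_not_subset_positive_at_False
  by blast

lemma compact_space_isbell_space: "compact_space isbell_space"
proof -
  have "topspace isbell_space = above_at_True 0"
    unfolding topspace_isbell_topology above_at_True_def by simp
  then show ?thesis
    using above_at_True_in_Kset unfolding compact_space_def Kset_def by simp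
qed

theorem mainTheorem19:
  shows "S_star_well_filtered (scott_topology :: nat topology)
       \<and> \<not> weak_well_filtered (isbell_topology (scott_topology :: bool topology) (scott_topology :: nat topology))
       \<and> \<not> S_star_well_filtered (isbell_topology (scott_topology :: bool topology) (scott_topology :: nat topology))"
proof -
  have "step_map 0 \<in> topspace isbell_space"
    using step_map_in_cmaps by (simp add: topspace_isbell_topology)
  then have "\<not> S_star_well_filtered isbell_space"
    using weak_well_filtered_if_S_star_well_filtered[of isbell_space] compact_space_isbell_space
      not_weak_well_filtered_isbell_space by blast
  then show ?thesis
    using S_star_well_filtered_scott_nat not_weak_well_filtered_isbell_space by blast
qed

end
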